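(* Let $M$ be a totally ordered finite monoid. For all $a,b,c\in M$, if $a\le_J b$ and $a\le_J c$ then $a\le_J bc$.
   Context: For $m$ in a monoid $M$, $J(m)=\{xmy:x,y\in M\}$; $a\le_J b$ iff $J(a)\subseteq J(b)$. $M$ is totally ordered if for all $a,b\in M$, $J(ab)=J(a)$ or $J(ab)=J(b)$. *)

theory Defs
  imports Main
begin

definition Jideal :: "'a::monoid_mult \<Rightarrow> 'a set" where
  "Jideal m = {x * m * y | x y. True}"

definition le_J :: "'a::monoid_mult \<Rightarrow> 'a \<Rightarrow> bool" where
  "le_J a b \<longleftrightarrow> Jideal a \<subseteq> Jideal b"

definition totally_ordered_monoid :: "'a::monoid_mult itself \<Rightarrow> bool" where
  "totally_ordered_monoid _ \<longleftrightarrow>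
     (\<forall>a b :: 'a. Jideal (a * b) = Jideal a \<or> Jideal (a * b) = Jideal b)"

end

theory Submission
  imports Defs
begin

lemma Jideal_mult_cases:
  fixes b c :: "'a::monoid_mult"
  assumes "totally_ordered_monoid TYPE('a)"
  obtains "Jideal (b * c) = Jideal b" | "Jideal (b * c) = Jideal c"
  using assms unfolding totally_ordered_monoid_def by blast

theorem lemmaB3:
  fixes a b c :: "'a::{monoid_mult, finite}"
  assumes "totally_ordered_monoid TYPE('a)"
    and "le_J a b" and "le_J a c"
  shows "le_J a (b * c)"
  using Jideal_mult_cases[OF assms(1), of b c] assms(2,3)
  unfolding le_J_def by metis

end
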